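(* Let $\alpha,\beta,b,d>0$, $d_2>0$, $\tau>0$, and let $\Gamma(x,y,a)$ be the Green's function described in the context. The principal eigenvalue $s_1$ of the nonlocal eigenvalue problem $s\psi=d_2\psi''-\alpha\psi+e^{-s\tau}\frac{b\beta}{d}\int_0^\pi\Gamma(x,y,\tau)\psi(y)\,dy$, $x\in(0,\pi)$, $\psi'(0)=\psi'(\pi)=0$, has the same sign as $\lambda_1=-\alpha+\frac{\beta b}{d e^{\alpha\tau}}$.
   Context: $\Gamma(x,y,a)$, $x,y\in[0,\pi]$, $a>0$, is the Green's function of $\partial_aW=d_2\partial_{xx}W-\alpha W$ on $(0,\pi)$ with Neumann conditions $\partial_xW(a,0)=\partial_xW(a,\pi)=0$, i.e. the solution with initial value $W_0$ is $\int_0^\pi\Gamma(x,y,a)W_0(y)\,dy$. The principal eigenvalue of the nonlocal problem is the eigenvalue associated with a strictly positive eigenfunction (its existence is known). *)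

theory Defs
  imports "HOL-Analysis.Analysis"
begin

text \<open>Green's function of  W_a = d2 W_xx - alpha W  on (0,pi) with homogeneous Neumann
  boundary conditions, given by its eigenfunction (cosine) expansion:
  Gamma(x,y,a) = e^(-alpha a) (1/pi + (2/pi) sum_{n>=1} e^(-d2 n^2 a) cos(n x) cos(n y)).\<close>
definition green_neumann :: "real \<Rightarrow> real \<Rightarrow> real \<Rightarrow> real \<Rightarrow> real \<Rightarrow> real" where
  "green_neumann d2 \<alpha> x y a =
     exp (- \<alpha> * a) * (1 / pi + 2 / pi *
       (\<Sum>n. exp (- d2 * (real (Suc n))^2 * a) * cos (real (Suc n) * x) * cos (real (Suc n) * y)))"

text \<open>s is a principal eigenvalue of the nonlocal problem: there is a strictly positive
  classical (C^2 on [0,pi]) eigenfunction psi with Neumann boundary conditions.\<close>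
definition principal_eigenpair ::
  "real \<Rightarrow> real \<Rightarrow> real \<Rightarrow> real \<Rightarrow> real \<Rightarrow> real \<Rightarrow> real \<Rightarrow> (real \<Rightarrow> real) \<Rightarrow> bool" where
  "principal_eigenpair \<alpha> \<beta> b d d2 \<tau> s \<psi> \<longleftrightarrow>
     (\<exists>\<psi>' \<psi>''.
        (\<forall>x\<in>{0..pi}. (\<psi> has_real_derivative \<psi>' x) (at x within {0..pi})) \<and>
        (\<forall>x\<in>{0..pi}. (\<psi>' has_real_derivative \<psi>'' x) (at x within {0..pi})) \<and>
        continuous_on {0..pi} \<psi>'' \<and>
        \<psi>' 0 = 0 \<and> \<psi>' pi = 0 \<and>
        (\<forall>x\<in>{0<..<pi}.
           s * \<psi> x = d2 * \<psi>'' x - \<alpha> * \<psi> x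
             + exp (- s * \<tau>) * (b * \<beta> / d) *
               integral {0..pi} (\<lambda>y. green_neumann d2 \<alpha> x y \<tau> * \<psi> y))) \<and>
     (\<forall>x\<in>{0..pi}. \<psi> x > 0)"

end

theory Submission
  imports Defs
begin

(* Integrating the eigenvalue equation over (0, pi), the term d2 psi'' drops out by the Neumann
   conditions, and the nonlocal term contributes exp(-alpha tau) times the mass of psi, because
   every nonconstant cosine mode of the Green's function has mean zero (the series is integrated
   termwise by dominated convergence).  Since psi > 0 its mass is positive, so s solves the
   characteristic equation s + alpha = exp(-s tau) L with L = b beta / (d exp(alpha tau)).
   The left side minus the right side is increasing in s, vanishes at s, and equals
   alpha - L = -lambda_1 at 0; hence sgn s = sgn lambda_1. *)

lemma integral_cos_nat_mult_0_pi:
  assumes "n \<noteq> 0"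
  shows "integral {0..pi} (\<lambda>x. cos (real n * x)) = 0"
proof -
  have "((\<lambda>x. cos (real n * x)) has_integral sin (real n * pi) / real n - sin (real n * 0) / real n) {0..pi}"
    using assms
    by (intro fundamental_theorem_of_calculus)
       (auto intro!: derivative_eq_intros simp: has_real_derivative_iff_has_vector_derivative[symmetric])
  then show ?thesis
    by (simp add: integral_unique)
qed

lemma summable_exp_neg_Suc_square:
  fixes c :: real
  assumes "c > 0"
  shows "summable (\<lambda>n. exp (- c * (real (Suc n))^2))"
proof (rule summable_comparison_test)
  show "summable (\<lambda>n. exp (- c) ^ n)"
    using assms by (intro summable_geometric) simp
  have "exp (- c * (real (Suc n))^2) \<le> exp (- c) ^ n" for n
  proof -
    have "real n \<le> (real (Suc n))^2"
      by (simp add: power2_eq_square algebra_simps)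
    then have "- c * (real (Suc n))^2 \<le> real n * (- c)"
      using assms by (simp add: algebra_simps mult_left_mono)
    then show ?thesis
      by (simp add: exp_of_nat_mult[symmetric])
  qed
  then show "\<exists>N. \<forall>n\<ge>N. norm (exp (- c * (real (Suc n))^2)) \<le> exp (- c) ^ n"
    by simp
qed

lemma integral_pos_continuous:
  fixes f :: "real \<Rightarrow> real"
  assumes "a < b" "continuous_on {a..b} f" "\<And>x. x \<in> {a..b} \<Longrightarrow> f x > 0"
  shows "integral {a..b} f > 0"
proof -
  obtain x0 where x0: "x0 \<in> {a..b}" "\<And>y. y \<in> {a..b} \<Longrightarrow> f x0 \<le> f y"
    using continuous_attains_inf[OF compact_Icc _ assms(2)] assms(1) by auto
  have "integral {a..b} (\<lambda>_. f x0) \<le> integral {a..b} f"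
    using x0 assms(2) by (intro integral_le integrable_continuous_interval) auto
  moreover have "integral {a..b} (\<lambda>_. f x0) > 0"
    using assms x0 by simp
  ultimately show ?thesis
    by linarith
qed

definition cosine_kernel :: "(nat \<Rightarrow> real) \<Rightarrow> real \<Rightarrow> real \<Rightarrow> real" where
  "cosine_kernel a x y = (\<Sum>n. a n * cos (real (Suc n) * x) * cos (real (Suc n) * y))"

lemma abs_mult_cos_mult_cos_le:
  fixes c u v :: real
  shows "\<bar>c * cos u * cos v\<bar> \<le> \<bar>c\<bar>"
proof -
  have "\<bar>cos u\<bar> * \<bar>cos v\<bar> \<le> 1"
    by (intro mult_le_one) auto
  then show ?thesis
    by (simp add: abs_mult mult.assoc mult_left_le)
qed

lemma cosine_kernel_partial_sum_bound:
  assumes "summable (\<lambda>n. \<bar>a n\<bar>)"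
  shows "\<bar>\<Sum>n<k. a n * cos (real (Suc n) * x) * cos (real (Suc n) * y)\<bar> \<le> (\<Sum>n. \<bar>a n\<bar>)"
proof -
  have "\<bar>\<Sum>n<k. a n * cos (real (Suc n) * x) * cos (real (Suc n) * y)\<bar> \<le> (\<Sum>n<k. \<bar>a n\<bar>)"
    by (rule order_trans[OF sum_abs sum_mono[OF abs_mult_cos_mult_cos_le]])
  also have "\<dots> \<le> (\<Sum>n. \<bar>a n\<bar>)"
    using assms by (intro sum_le_suminf) auto
  finally show ?thesis .
qed

lemma summable_cosine_kernel:
  assumes "summable (\<lambda>n. \<bar>a n\<bar>)"
  shows "summable (\<lambda>n. a n * cos (real (Suc n) * x) * cos (real (Suc n) * y))"
  using abs_mult_cos_mult_cos_le by (intro summable_comparison_test[OF _ assms]) auto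

lemma integral_cosine_kernel_mult:
  assumes a: "summable (\<lambda>n. \<bar>a n\<bar>)" and \<psi>: "continuous_on {0..pi} \<psi>"
  shows "(\<lambda>y. cosine_kernel a x y * \<psi> y) integrable_on {0..pi}"
    and "(\<lambda>k. \<Sum>n<k. a n * cos (real (Suc n) * x) * integral {0..pi} (\<lambda>y. cos (real (Suc n) * y) * \<psi> y))
           \<longlonglongrightarrow> integral {0..pi} (\<lambda>y. cosine_kernel a x y * \<psi> y)"
proof -
  define f where "f k y = (\<Sum>n<k. a n * cos (real (Suc n) * x) * cos (real (Suc n) * y)) * \<psi> y" for k y
  have f_integrable: "f k integrable_on {0..pi}" for k
    unfolding f_def by (intro integrable_continuous_interval continuous_intros \<psi>)
  have bound_integrable: "(\<lambda>y. (\<Sum>n. \<bar>a n\<bar>) * \<bar>\<psi> y\<bar>) integrable_on {0..pi}"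
    by (intro integrable_continuous_interval continuous_intros \<psi>)
  have f_bound: "norm (f k y) \<le> (\<Sum>n. \<bar>a n\<bar>) * \<bar>\<psi> y\<bar>" for k y
    unfolding f_def real_norm_def abs_mult
    by (intro mult_right_mono cosine_kernel_partial_sum_bound a) simp
  have f_lim: "(\<lambda>k. f k y) \<longlonglongrightarrow> cosine_kernel a x y * \<psi> y" for y
    unfolding f_def cosine_kernel_def
    by (intro tendsto_mult_right summable_LIMSEQ summable_cosine_kernel a)
  have integral_f: "integral {0..pi} (f k)
      = (\<Sum>n<k. a n * cos (real (Suc n) * x) * integral {0..pi} (\<lambda>y. cos (real (Suc n) * y) * \<psi> y))" for k
  proof -
    have "integral {0..pi} (f k)
        = integral {0..pi} (\<lambda>y. \<Sum>n<k. (a n * cos (real (Suc n) * x)) * (cos (real (Suc n) * y) * \<psi> y))"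
      unfolding f_def sum_distrib_right by (simp add: algebra_simps)
    also have "\<dots> = (\<Sum>n<k. integral {0..pi} (\<lambda>y. (a n * cos (real (Suc n) * x)) * (cos (real (Suc n) * y) * \<psi> y)))"
      by (intro integral_sum integrable_continuous_interval continuous_intros \<psi>) simp
    finally show ?thesis
      by simp
  qed
  note dominated = dominated_convergence[OF f_integrable bound_integrable f_bound f_lim]
  show "(\<lambda>y. cosine_kernel a x y * \<psi> y) integrable_on {0..pi}"
    by (rule dominated(1))
  show "(\<lambda>k. \<Sum>n<k. a n * cos (real (Suc n) * x) * integral {0..pi} (\<lambda>y. cos (real (Suc n) * y) * \<psi> y))
           \<longlonglongrightarrow> integral {0..pi} (\<lambda>y. cosine_kernel a x y * \<psi> y)"
    using dominated(2) by (simp add: integral_f)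
qed

lemma integral_integral_cosine_kernel_mult:
  assumes a: "summable (\<lambda>n. \<bar>a n\<bar>)" and \<psi>: "continuous_on {0..pi} \<psi>"
  shows "(\<lambda>x. integral {0..pi} (\<lambda>y. cosine_kernel a x y * \<psi> y)) integrable_on {0..pi}"
    and "integral {0..pi} (\<lambda>x. integral {0..pi} (\<lambda>y. cosine_kernel a x y * \<psi> y)) = 0"
proof -
  define c where "c n = integral {0..pi} (\<lambda>y. cos (real (Suc n) * y) * \<psi> y)" for n
  define P where "P k x = (\<Sum>n<k. a n * cos (real (Suc n) * x) * c n)" for k x
  define M where "M = (\<Sum>n. \<bar>a n\<bar>) * integral {0..pi} (\<lambda>y. \<bar>\<psi> y\<bar>)"
  have P_integrable: "P k integrable_on {0..pi}" for k
    unfolding P_def by (intro integrable_continuous_interval continuous_intros)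
  have c_bound: "\<bar>c n\<bar> \<le> integral {0..pi} (\<lambda>y. \<bar>\<psi> y\<bar>)" for n
    unfolding c_def real_norm_def[symmetric]
    by (intro integral_norm_bound_integral integrable_continuous_interval continuous_intros \<psi>)
       (auto simp: abs_mult mult_left_le_one_le)
  have P_bound: "norm (P k x) \<le> M" for k x
  proof -
    have "\<bar>P k x\<bar> \<le> (\<Sum>n<k. \<bar>a n\<bar> * \<bar>c n\<bar>)"
      unfolding P_def
      by (rule order_trans[OF sum_abs sum_mono])
         (auto simp: abs_mult intro!: mult_right_mono mult_right_le_one_le)
    also have "\<dots> \<le> (\<Sum>n<k. \<bar>a n\<bar>) * integral {0..pi} (\<lambda>y. \<bar>\<psi> y\<bar>)"
      unfolding sum_distrib_right by (intro sum_mono mult_left_mono c_bound) auto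
    also have "\<dots> \<le> M"
      unfolding M_def using a c_bound[of 0]
      by (intro mult_right_mono sum_le_suminf) auto
    finally show ?thesis
      by simp
  qed
  have P_lim: "(\<lambda>k. P k x) \<longlonglongrightarrow> integral {0..pi} (\<lambda>y. cosine_kernel a x y * \<psi> y)" for x
    unfolding P_def c_def by (rule integral_cosine_kernel_mult(2)[OF a \<psi>])
  have integral_P: "integral {0..pi} (P k) = 0" for k
  proof -
    have "integral {0..pi} (P k) = (\<Sum>n<k. a n * c n * integral {0..pi} (\<lambda>x. cos (real (Suc n) * x)))"
      unfolding P_def
      by (subst integral_sum) (auto simp: algebra_simps intro!: integrable_continuous_interval continuous_intros)
    then show ?thesis
      by (simp add: integral_cos_nat_mult_0_pi del: of_nat_Suc)
  qed
  note dominated = dominated_convergence[OF P_integrable integrable_const_ivl P_bound P_lim]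
  show "(\<lambda>x. integral {0..pi} (\<lambda>y. cosine_kernel a x y * \<psi> y)) integrable_on {0..pi}"
    by (rule dominated(1))
  show "integral {0..pi} (\<lambda>x. integral {0..pi} (\<lambda>y. cosine_kernel a x y * \<psi> y)) = 0"
    using dominated(2) by (simp add: integral_P LIMSEQ_const_iff)
qed

lemma green_neumann_eq_cosine_kernel:
  "green_neumann d2 \<alpha> x y t
     = exp (- \<alpha> * t) * (1 / pi + 2 / pi * cosine_kernel (\<lambda>n. exp (- d2 * (real (Suc n))^2 * t)) x y)"
  unfolding green_neumann_def cosine_kernel_def ..

lemma integral_integral_green_neumann_mult:
  assumes "d2 > 0" "t > 0" and \<psi>: "continuous_on {0..pi} \<psi>"
  shows "integral {0..pi} (\<lambda>x. integral {0..pi} (\<lambda>y. green_neumann d2 \<alpha> x y t * \<psi> y))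
           = exp (- \<alpha> * t) * integral {0..pi} \<psi>"
proof -
  define a where "a n = exp (- d2 * (real (Suc n))^2 * t)" for n
  define H where "H x = integral {0..pi} (\<lambda>y. cosine_kernel a x y * \<psi> y)" for x
  have a: "summable (\<lambda>n. \<bar>a n\<bar>)"
    using summable_exp_neg_Suc_square[of "d2 * t"] assms(1,2) by (simp add: a_def mult_ac)
  have \<psi>_integrable: "\<psi> integrable_on {0..pi}"
    using \<psi> by (rule integrable_continuous_interval)
  have inner: "integral {0..pi} (\<lambda>y. green_neumann d2 \<alpha> x y t * \<psi> y)
      = exp (- \<alpha> * t) * (1 / pi * integral {0..pi} \<psi> + 2 / pi * H x)" for x
  proof -
    have "integral {0..pi} (\<lambda>y. green_neumann d2 \<alpha> x y t * \<psi> y)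
        = integral {0..pi} (\<lambda>y. exp (- \<alpha> * t) * (1 / pi * \<psi> y + 2 / pi * (cosine_kernel a x y * \<psi> y)))"
      unfolding green_neumann_eq_cosine_kernel a_def by (simp add: algebra_simps)
    also have "\<dots> = exp (- \<alpha> * t) * (1 / pi * integral {0..pi} \<psi> + 2 / pi * H x)"
      unfolding H_def
      using \<psi>_integrable integral_cosine_kernel_mult(1)[OF a \<psi>, of x]
      by (simp add: integral_add)
    finally show ?thesis .
  qed
  have H_integral: "(H has_integral 0) {0..pi}"
    unfolding H_def has_integral_integrable_integral
    using integral_integral_cosine_kernel_mult[OF a \<psi>] by auto
  have "((\<lambda>x. exp (- \<alpha> * t) * (1 / pi * integral {0..pi} \<psi> + 2 / pi * H x)) has_integral
      exp (- \<alpha> * t) * (pi *\<^sub>R (1 / pi * integral {0..pi} \<psi>) + 2 / pi * 0)) {0..pi}"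
    by (intro has_integral_mult_right has_integral_add has_integral_const_real[of _ 0 pi, simplified]
        H_integral)
  then have "integral {0..pi} (\<lambda>x. exp (- \<alpha> * t) * (1 / pi * integral {0..pi} \<psi> + 2 / pi * H x))
      = exp (- \<alpha> * t) * (pi *\<^sub>R (1 / pi * integral {0..pi} \<psi>) + 2 / pi * 0)"
    by (rule integral_unique)
  then show ?thesis
    unfolding inner by simp
qed

lemma principal_eigenpair_characteristic_equation:
  assumes "d2 > 0" "\<tau> > 0" "principal_eigenpair \<alpha> \<beta> b d d2 \<tau> s \<psi>"
  shows "s + \<alpha> = exp (- s * \<tau>) * (b * \<beta> / d * exp (- \<alpha> * \<tau>))"
proof -
  obtain \<psi>' \<psi>'' where
        \<psi>': "\<And>x. x \<in> {0..pi} \<Longrightarrow> (\<psi> has_real_derivative \<psi>' x) (at x within {0..pi})"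
    and \<psi>'': "\<And>x. x \<in> {0..pi} \<Longrightarrow> (\<psi>' has_real_derivative \<psi>'' x) (at x within {0..pi})"
    and neumann: "\<psi>' 0 = 0" "\<psi>' pi = 0"
    and eigen: "\<And>x. x \<in> {0<..<pi} \<Longrightarrow> s * \<psi> x = d2 * \<psi>'' x - \<alpha> * \<psi> x
             + exp (- s * \<tau>) * (b * \<beta> / d) * integral {0..pi} (\<lambda>y. green_neumann d2 \<alpha> x y \<tau> * \<psi> y)"
    and pos: "\<And>x. x \<in> {0..pi} \<Longrightarrow> \<psi> x > 0"
    using assms(3) unfolding principal_eigenpair_def by blast
  have \<psi>_cont: "continuous_on {0..pi} \<psi>"
    using \<psi>' by (rule DERIV_continuous_on)
  have "(\<psi>'' has_integral \<psi>' pi - \<psi>' 0) {0..pi}"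
    using \<psi>'' by (intro fundamental_theorem_of_calculus) (auto simp: has_real_derivative_iff_has_vector_derivative)
  then have \<psi>''_integral: "(\<psi>'' has_integral 0) {0..pi}"
    by (simp add: neumann)
  define \<Psi> where "\<Psi> = integral {0..pi} \<psi>"
  have \<Psi>_pos: "\<Psi> > 0"
    unfolding \<Psi>_def using \<psi>_cont pos by (intro integral_pos_continuous) auto
  have "((\<lambda>x. (s + \<alpha>) * \<psi> x - d2 * \<psi>'' x) has_integral (s + \<alpha>) * \<Psi> - d2 * 0) {0..pi}"
    unfolding \<Psi>_def
    by (intro has_integral_diff has_integral_mult_right integrable_integral \<psi>''_integral
        integrable_continuous_interval \<psi>_cont)
  then have "(s + \<alpha>) * \<Psi> = integral {0..pi} (\<lambda>x. (s + \<alpha>) * \<psi> x - d2 * \<psi>'' x)"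
    by (simp add: integral_unique)
  also have "\<dots> = integral {0..pi} (\<lambda>x. exp (- s * \<tau>) * (b * \<beta> / d)
                    * integral {0..pi} (\<lambda>y. green_neumann d2 \<alpha> x y \<tau> * \<psi> y))"
    by (rule integral_spike[of "{0, pi}"]) (auto simp: eigen algebra_simps)
  also have "\<dots> = exp (- s * \<tau>) * (b * \<beta> / d * exp (- \<alpha> * \<tau>)) * \<Psi>"
    using integral_integral_green_neumann_mult[OF assms(1,2) \<psi>_cont] by (simp add: \<Psi>_def)
  finally show ?thesis
    using \<Psi>_pos by (subst (asm) mult_right_cancel) auto
qed

lemma sgn_eq_of_characteristic_equation:
  fixes s \<alpha> \<tau> L :: real
  assumes "\<tau> \<ge> 0" "L \<ge> 0" "s + \<alpha> = exp (- s * \<tau>) * L"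
  shows "sgn s = sgn (L - \<alpha>)"
proof (cases s "0::real" rule: linorder_cases)
  case less
  then have "exp (- s * \<tau>) \<ge> 1"
    using assms(1) by (simp add: mult_nonpos_nonneg)
  then have "exp (- s * \<tau>) * L \<ge> L"
    using assms(2) by (simp add: mult_le_cancel_right1)
  then show ?thesis
    using less assms(3) by (simp add: sgn_if)
next
  case greater
  then have "exp (- s * \<tau>) \<le> 1"
    using assms(1) by simp
  then have "exp (- s * \<tau>) * L \<le> L"
    using assms(2) by (simp add: mult_left_le_one_le)
  then show ?thesis
    using greater assms(3) by (simp add: sgn_if)
qed (use assms(3) in simp)

theorem lemma5p2:
  fixes \<alpha> \<beta> b d d2 \<tau> s :: real and \<psi> :: "real \<Rightarrow> real"
  assumes "\<alpha> > 0" "\<beta> > 0" "b > 0" "d > 0" "d2 > 0" "\<tau> > 0"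
    and "principal_eigenpair \<alpha> \<beta> b d d2 \<tau> s \<psi>"
  shows "sgn s = sgn (- \<alpha> + \<beta> * b / (d * exp (\<alpha> * \<tau>)))"
proof -
  have "sgn s = sgn (b * \<beta> / d * exp (- \<alpha> * \<tau>) - \<alpha>)"
    using assms
    by (intro sgn_eq_of_characteristic_equation[OF _ _ principal_eigenpair_characteristic_equation]) auto
  also have "b * \<beta> / d * exp (- \<alpha> * \<tau>) - \<alpha> = - \<alpha> + \<beta> * b / (d * exp (\<alpha> * \<tau>))"
    by (simp add: exp_minus field_simps)
  finally show ?thesis .
qed

end
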